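(* In the symmetric-ordering setup, for every $w\ge2$ and all indices $\mu,\alpha_1,\ldots,\alpha_w$, $$\sum_{\sigma\in\Sigma_w}[\ldots[[\hat\partial^\mu,\hat x_{\alpha_{\sigma(1)}}],\hat x_{\alpha_{\sigma(2)}}],\ldots,\hat x_{\alpha_{\sigma(w)}}](1)=0\quad\text{in }U(\mathfrak g).$$
   Context: Symmetric-ordering setup: $\Bbbk$ is a field of characteristic $0$, $\mathfrak g$ an $n$-dimensional Lie algebra with basis $\hat x_1,\ldots,\hat x_n$; $\hat x_\alpha$ also denotes left multiplication by $\hat x_\alpha$ on $U(\mathfrak g)$, and commutators are taken in $\mathrm{End}_\Bbbk(U(\mathfrak g))$. $S(\mathfrak g)=\Bbbk[x_1,\ldots,x_n]$; the coexponential map $\xi:S(\mathfrak g)\to U(\mathfrak g)$ is the linear isomorphism $\xi(x_{\alpha_1}\cdots x_{\alpha_k})=\frac1{k!}\sum_{\sigma\in\Sigma_k}\hat x_{\alpha_{\sigma(1)}}\cdots\hat x_{\alpha_{\sigma(k)}}$; $\hat\partial^\mu\in\mathrm{End}_\Bbbk(U(\mathfrak g))$ is defined by $\hat\partial^\mu(\xi(f))=\xi(\partial f/\partial x_\mu)$. $\Sigma_w$ is the symmetric group; $1$ is the unit of $U(\mathfrak g)$. *)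

theory Defs
  imports "HOL-Combinatorics.Permutations" "HOL-Library.Function_Algebras"
begin

text \<open>
Lie algebra g with basis x_i indexed by a finite type 'i (n = CARD('i)),
given by structure constants: [x_a, x_b] = sum_c C a b c x_c.
The universal enveloping algebra U(g) is realised as the quotient of the free
associative algebra F on the x_i (finitely supported functions from words to 'k)
by the two-sided ideal generated by x_a x_b - x_b x_a - [x_a, x_b].
\<close>

type_synonym ('i, 'k) freealg = "'i list \<Rightarrow> 'k"

definition is_lie_alg :: "('i::finite \<Rightarrow> 'i \<Rightarrow> 'i \<Rightarrow> 'k::field) \<Rightarrow> bool" where
  "is_lie_alg C \<longleftrightarrow>
     (\<forall>a c. C a a c = 0) \<and>
     (\<forall>a b c. C a b c = - C b a c) \<and>
     (\<forall>a b c e. (\<Sum>d\<in>UNIV. C a b d * C d c e + C b c d * C d a e + C c a d * C d b e) = 0)"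

definition fa_carrier :: "('i, 'k::zero) freealg set" where
  "fa_carrier = {f. finite {w. f w \<noteq> 0}}"

definition fa_word :: "'i list \<Rightarrow> ('i, 'k::{zero,one}) freealg" where
  "fa_word u = (\<lambda>v. if v = u then 1 else 0)"

definition fa_scale :: "'k::times \<Rightarrow> ('i, 'k) freealg \<Rightarrow> ('i, 'k) freealg" where
  "fa_scale c f = (\<lambda>w. c * f w)"

definition fa_mult :: "('i, 'k::comm_semiring_1) freealg \<Rightarrow> ('i, 'k) freealg \<Rightarrow> ('i, 'k) freealg" where
  "fa_mult f g = (\<lambda>w. \<Sum>i\<le>length w. f (take i w) * g (drop i w))"

definition fa_lmul :: "'i \<Rightarrow> ('i, 'k::comm_semiring_1) freealg \<Rightarrow> ('i, 'k) freealg" where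
  "fa_lmul a f = fa_mult (fa_word [a]) f"

definition lie_rel :: "('i::finite \<Rightarrow> 'i \<Rightarrow> 'i \<Rightarrow> 'k::field) \<Rightarrow> 'i \<Rightarrow> 'i \<Rightarrow> ('i, 'k) freealg" where
  "lie_rel C a b = fa_word [a, b] - fa_word [b, a] - (\<Sum>c\<in>UNIV. fa_scale (C a b c) (fa_word [c]))"

text \<open>The two-sided ideal defining U(g) = F / I: the k-linear span of u r v,
  for words u, v and defining relations r.\<close>
definition env_ideal :: "('i::finite \<Rightarrow> 'i \<Rightarrow> 'i \<Rightarrow> 'k::field) \<Rightarrow> ('i, 'k) freealg set" where
  "env_ideal C =
     {\<Sum>g\<in>G. fa_scale (c g) g | G c. finite G \<and>
        G \<subseteq> {fa_mult (fa_mult (fa_word u) (lie_rel C a b)) (fa_word v) | u v a b. True}}"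

text \<open>Coexponential map on a monomial x_{a_1} ... x_{a_k} (given as the list of its indices).\<close>
definition coexp :: "'i list \<Rightarrow> ('i, 'k::field_char_0) freealg" where
  "coexp as = fa_scale (inverse (of_nat (fact (length as))))
     (\<Sum>\<sigma> | \<sigma> permutes {..<length as}. fa_word (map (\<lambda>i. as ! (\<sigma> i)) [0..<length as]))"

text \<open>Partial derivative d/dx_mu of the monomial x_{a_1}...x_{a_k} (product rule),
  pushed through the coexponential map: xi(d/dx_mu (x_{a_1}...x_{a_k})).\<close>
definition coexp_deriv :: "'i \<Rightarrow> 'i list \<Rightarrow> ('i, 'k::field_char_0) freealg" where
  "coexp_deriv \<mu> as = (\<Sum>j | j < length as \<and> as ! j = \<mu>. coexp (take j as @ drop (Suc j) as))"

text \<open>D represents a k-linear endomorphism of U(g) = F/I: it is k-linear on F,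
  preserves F and the ideal I, and it is the operator hat-partial^mu:
  D(xi(m)) = xi(d m / d x_mu) modulo I for every monomial m.\<close>
definition is_hat_partial ::
  "('i::finite \<Rightarrow> 'i \<Rightarrow> 'i \<Rightarrow> 'k::field_char_0) \<Rightarrow> 'i \<Rightarrow> (('i, 'k) freealg \<Rightarrow> ('i, 'k) freealg) \<Rightarrow> bool" where
  "is_hat_partial C \<mu> D \<longleftrightarrow>
     (\<forall>f\<in>fa_carrier. D f \<in> fa_carrier) \<and>
     (\<forall>f\<in>fa_carrier. \<forall>g\<in>fa_carrier. D (f + g) = D f + D g) \<and>
     (\<forall>c. \<forall>f\<in>fa_carrier. D (fa_scale c f) = fa_scale c (D f)) \<and>
     (\<forall>f\<in>env_ideal C \<inter> fa_carrier. D f \<in> env_ideal C) \<and>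
     (\<forall>as. D (coexp as) - coexp_deriv \<mu> as \<in> env_ideal C)"

fun iter_comm :: "(('i, 'k::comm_ring_1) freealg \<Rightarrow> ('i, 'k) freealg) \<Rightarrow> 'i list
                  \<Rightarrow> ('i, 'k) freealg \<Rightarrow> ('i, 'k) freealg" where
  "iter_comm D [] = D"
| "iter_comm D (a # as) = iter_comm (\<lambda>f. D (fa_lmul a f) - fa_lmul a (D f)) as"

end

theory Submission
  imports Defs "HOL.Modules" "HOL-Combinatorics.Multiset_Permutations"
begin

(* Symmetrise the iterated commutator over all orderings p of an index set N.
   Peeling off the last letter of p gives a recursion which is also satisfied by the
   binomial expansion
     sum_p sum_k (-1)^k (n choose k) x_{p_1..p_k} D(x_{p_{k+1}..p_n} f),
   so the two agree (sym_comm_eq_sym_expand).  At f = 1 the k-th summand is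
   T_k = sum_p x_{p_1..p_k} D(x_{p_{k+1}..p_n}).  Since the symmetrised word over N is
   n! times the coexponential of the monomial, the defining property of hat-partial gives
   T_0 = (mod I) n * sum_{b, alpha b = mu} Sym(N - b), where Sym is the symmetrised word, and left multiplication propagates this
   to T_k = (mod I) (n - k) * sum_{b, alpha b = mu} Sym(N - b).  The theorem follows from
   sum_k (-1)^k (n choose k) (n - k) = 0 for n >= 2. *)

lemma fun_sum_apply: "(sum f A) x = (\<Sum>i\<in>A. f i x)"
  by (induct A rule: infinite_finite_induct) auto

lemma fa_mult_word_left:
  "fa_mult (fa_word u) g = (\<lambda>w. if take (length u) w = u then g (drop (length u) w) else 0)"
proof (rule ext)
  fix w :: "'a list"
  have "fa_mult (fa_word u) g w
      = (\<Sum>i\<le>length w. if i = length u \<and> take (length u) w = u then g (drop (length u) w) else 0)"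
    unfolding fa_mult_def fa_word_def
    by (rule sum.cong) (auto simp: min_def split: if_splits)
  also have "\<dots> = (if take (length u) w = u then g (drop (length u) w) else 0)"
  proof (cases "take (length u) w = u")
    case True
    then have "length u \<le> length w" by (metis length_take min_def nat_le_linear)
    with True show ?thesis by (simp add: sum.delta')
  qed simp
  finally show "fa_mult (fa_word u) g w = (if take (length u) w = u then g (drop (length u) w) else 0)" .
qed

lemma fa_mult_word_right:
  "fa_mult g (fa_word v) =
     (\<lambda>w. if length v \<le> length w \<and> drop (length w - length v) w = v
          then g (take (length w - length v) w) else 0)"
proof (rule ext)
  fix w :: "'a list"
  let ?m = "length w - length v"
  have "fa_mult g (fa_word v) w
      = (\<Sum>i\<le>length w. if i = ?m \<and> length v \<le> length w \<and> drop ?m w = v then g (take ?m w) else 0)"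
    unfolding fa_mult_def fa_word_def
    by (rule sum.cong) (auto split: if_splits)
  also have "\<dots> = (if length v \<le> length w \<and> drop ?m w = v then g (take ?m w) else 0)"
    by (cases "length v \<le> length w \<and> drop ?m w = v") (auto simp: sum.delta')
  finally show "fa_mult g (fa_word v) w = (if length v \<le> length w \<and> drop ?m w = v then g (take ?m w) else 0)" .
qed

lemma fa_lmul_eq: "fa_lmul a f = (\<lambda>w. case w of [] \<Rightarrow> 0 | b # u \<Rightarrow> if b = a then f u else 0)"
  unfolding fa_lmul_def fa_mult_word_left by (rule ext) (auto split: list.splits)

lemma fa_mult_word_nil [simp]: "fa_mult (fa_word []) g = g"
  unfolding fa_mult_word_left by simp

lemma fa_mult_word_cons: "fa_mult (fa_word (a # u)) g = fa_lmul a (fa_mult (fa_word u) g)"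
  unfolding fa_lmul_eq fa_mult_word_left by (rule ext) (auto split: list.splits)

lemma fa_mult_word_append: "fa_mult (fa_word (u @ v)) g = fa_mult (fa_word u) (fa_mult (fa_word v) g)"
  by (induct u) (simp_all add: fa_mult_word_cons)

lemma fa_mult_word_word: "fa_mult (fa_word u) (fa_word v) = fa_word (u @ v)"
  unfolding fa_mult_word_left
  by (rule ext) (auto simp: fa_word_def append_eq_conv_conj, metis append_take_drop_id)

lemma fa_lmul_word: "fa_lmul a (fa_word u) = fa_word (a # u)"
  unfolding fa_lmul_def fa_mult_word_word by simp

lemma fa_lmul_add: "fa_lmul a (f + g) = fa_lmul a f + fa_lmul a g"
  unfolding fa_lmul_eq by (rule ext) (auto split: list.splits)

lemma fa_lmul_diff: "fa_lmul a (f - g) = fa_lmul a f - (fa_lmul a g :: ('i, 'k::comm_ring_1) freealg)"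
  unfolding fa_lmul_eq by (rule ext) (auto split: list.splits)

lemma fa_lmul_zero: "fa_lmul a 0 = 0"
  unfolding fa_lmul_eq by (rule ext) (auto split: list.splits)

lemma fa_lmul_scale: "fa_lmul a (fa_scale c f) = fa_scale c (fa_lmul a f)"
  unfolding fa_lmul_eq fa_scale_def by (rule ext) (auto split: list.splits)

lemma fa_lmul_sum: "fa_lmul a (sum f A) = (\<Sum>i\<in>A. fa_lmul a (f i))"
  unfolding fa_lmul_eq by (rule ext) (auto simp: fun_sum_apply split: list.splits)

(* Left and right multiplication by words commute; needed for the ideal to be two-sided. *)
lemma fa_lmul_mult_word_right:
  "fa_lmul a (fa_mult g (fa_word v)) = fa_mult (fa_lmul a g) (fa_word v)"
proof (rule ext)
  fix w
  show "fa_lmul a (fa_mult g (fa_word v)) w = fa_mult (fa_lmul a g) (fa_word v) w"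
  proof (cases w)
    case (Cons b u)
    consider "length v \<le> length u" | "length v = Suc (length u)" | "Suc (length u) < length v"
      by linarith
    then show ?thesis
      by cases (auto simp: Cons Suc_diff_le fa_mult_word_right fa_lmul_eq)
  qed (simp add: fa_mult_word_right fa_lmul_eq)
qed

lemma fa_scale_one: "fa_scale 1 (f :: ('i, 'k::monoid_mult) freealg) = f"
  unfolding fa_scale_def by simp

lemma fa_scale_scale: "fa_scale a (fa_scale b f) = fa_scale (a * b) (f :: ('i, 'k::semigroup_mult) freealg)"
  unfolding fa_scale_def by (rule ext) (simp add: mult.assoc)

lemma fa_scale_zero_left: "fa_scale (0::'k::mult_zero) f = 0"
  unfolding fa_scale_def by (rule ext) simp

lemma fa_scale_zero_right: "fa_scale a (0 :: ('i, 'k::mult_zero) freealg) = 0"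
  unfolding fa_scale_def by (rule ext) simp

lemma fa_scale_diff: "fa_scale a (f - g) = fa_scale a f - fa_scale a (g :: ('i, 'k::comm_ring_1) freealg)"
  unfolding fa_scale_def by (rule ext) (simp add: algebra_simps)

lemma fa_scale_sum: "fa_scale (c::'k::comm_semiring_1) (sum f A) = (\<Sum>i\<in>A. fa_scale c (f i))"
  unfolding fa_scale_def by (rule ext) (simp add: fun_sum_apply sum_distrib_left)

lemma fa_scale_sum_left:
  "(\<Sum>k\<in>A. fa_scale (c k) f) = fa_scale (\<Sum>k\<in>A. c k) (f :: ('i, 'k::comm_semiring_1) freealg)"
  unfolding fa_scale_def by (rule ext) (simp add: fun_sum_apply sum_distrib_right)

(* The free algebra is a vector space under fa_scale, so the span machinery of HOL applies. *)
lemma module_fa_scale: "module (fa_scale :: 'k::field \<Rightarrow> ('i, 'k) freealg \<Rightarrow> _)"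
  unfolding module_def by (auto simp: fa_scale_def fun_eq_iff algebra_simps)

definition ideal_gens :: "('i::finite \<Rightarrow> 'i \<Rightarrow> 'i \<Rightarrow> 'k::field) \<Rightarrow> ('i, 'k) freealg set" where
  "ideal_gens C = {fa_mult (fa_mult (fa_word u) (lie_rel C a b)) (fa_word v) | u v a b. True}"

lemma env_ideal_span: "env_ideal C = module.span fa_scale (ideal_gens C)"
  unfolding env_ideal_def module.span_explicit[OF module_fa_scale] ideal_gens_def by simp

lemma env_ideal_scale: "f \<in> env_ideal C \<Longrightarrow> fa_scale c f \<in> env_ideal C"
  unfolding env_ideal_span by (rule module.span_scale[OF module_fa_scale])

lemma env_ideal_sum: "(\<And>x. x \<in> A \<Longrightarrow> f x \<in> env_ideal C) \<Longrightarrow> sum f A \<in> env_ideal C"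
  unfolding env_ideal_span by (rule module.span_sum[OF module_fa_scale])

(* Left multiplication by a generator maps generators to generators, hence the ideal into itself. *)
lemma ideal_gens_lmul: "g \<in> ideal_gens C \<Longrightarrow> fa_lmul a g \<in> ideal_gens C"
  unfolding ideal_gens_def
  by (clarsimp simp: fa_lmul_mult_word_right fa_mult_word_cons[symmetric]) blast

lemma env_ideal_lmul:
  assumes "f \<in> env_ideal C"
  shows "fa_lmul a f \<in> env_ideal C"
  using assms unfolding env_ideal_span
proof (rule module.span_induct_alt[OF module_fa_scale])
  show "fa_lmul a 0 \<in> module.span fa_scale (ideal_gens C)"
    by (simp add: fa_lmul_zero module.span_zero[OF module_fa_scale] flip: zero_fun_def)
next
  fix c g h
  assume "g \<in> ideal_gens C" and "fa_lmul a h \<in> module.span fa_scale (ideal_gens C)"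
  then show "fa_lmul a (fa_scale c g + h) \<in> module.span fa_scale (ideal_gens C)"
    unfolding fa_lmul_add fa_lmul_scale
    by (intro module.span_add[OF module_fa_scale] module.span_scale[OF module_fa_scale])
      (simp_all add: module.span_base[OF module_fa_scale] ideal_gens_lmul)
qed

lemma fa_carrier_word: "(fa_word u :: ('i, 'k::zero_neq_one) freealg) \<in> fa_carrier"
  unfolding fa_carrier_def fa_word_def
  by (rule CollectI, rule finite_subset[of _ "{u}"]) auto

lemma fa_carrier_add: "(f :: ('i, 'k::monoid_add) freealg) \<in> fa_carrier \<Longrightarrow> g \<in> fa_carrier \<Longrightarrow> f + g \<in> fa_carrier"
  unfolding fa_carrier_def
  by (rule CollectI, rule finite_subset[of _ "{w. f w \<noteq> 0} \<union> {w. g w \<noteq> 0}"]) auto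

lemma fa_carrier_zero: "0 \<in> fa_carrier"
  unfolding fa_carrier_def by simp

lemma fa_carrier_sum: "(\<And>x. x \<in> A \<Longrightarrow> f x \<in> fa_carrier) \<Longrightarrow> sum f A \<in> fa_carrier"
  by (induct A rule: infinite_finite_induct) (auto simp: fa_carrier_add fa_carrier_zero)

lemma fa_carrier_scale: "f \<in> fa_carrier \<Longrightarrow> fa_scale (c::'k::mult_zero) f \<in> fa_carrier"
  unfolding fa_carrier_def fa_scale_def
  by (rule CollectI, rule finite_subset[of _ "{w. f w \<noteq> 0}"]) auto

lemma fa_carrier_coexp: "coexp as \<in> fa_carrier"
  unfolding coexp_def by (intro fa_carrier_scale fa_carrier_sum fa_carrier_word)

context
  fixes C :: "'i::finite \<Rightarrow> 'i \<Rightarrow> 'i \<Rightarrow> 'k::field_char_0" and \<mu> :: 'i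
    and D :: "('i, 'k) freealg \<Rightarrow> ('i, 'k) freealg"
  assumes D: "is_hat_partial C \<mu> D"
begin

lemma hat_partial_add: "f \<in> fa_carrier \<Longrightarrow> g \<in> fa_carrier \<Longrightarrow> D (f + g) = D f + D g"
  using D unfolding is_hat_partial_def by blast

lemma hat_partial_scale: "f \<in> fa_carrier \<Longrightarrow> D (fa_scale c f) = fa_scale c (D f)"
  using D unfolding is_hat_partial_def by blast

lemma hat_partial_coexp: "D (coexp as) - coexp_deriv \<mu> as \<in> env_ideal C"
  using D unfolding is_hat_partial_def by blast

lemma hat_partial_zero: "D 0 = 0"
  using hat_partial_add[OF fa_carrier_zero fa_carrier_zero] by simp

lemma hat_partial_sum: "(\<And>x. x \<in> A \<Longrightarrow> f x \<in> fa_carrier) \<Longrightarrow> D (sum f A) = (\<Sum>x\<in>A. D (f x))"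
  by (induct A rule: infinite_finite_induct)
    (simp_all add: hat_partial_zero hat_partial_add fa_carrier_sum)

end

lemma sum_permutations_of_set_cons:
  assumes "finite A" "A \<noteq> {}"
  shows "(\<Sum>p\<in>permutations_of_set A. G p) = (\<Sum>x\<in>A. \<Sum>q\<in>permutations_of_set (A - {x}). G (x # q))"
proof -
  have "(\<Sum>p\<in>permutations_of_set A. G p) = (\<Sum>x\<in>A. \<Sum>p\<in>(#) x ` permutations_of_set (A - {x}). G p)"
    unfolding permutations_of_set_nonempty[OF assms(2)]
    by (rule sum.UNION_disjoint) (auto simp: assms(1))
  also have "\<dots> = (\<Sum>x\<in>A. \<Sum>q\<in>permutations_of_set (A - {x}). G (x # q))"
    by (rule sum.cong, simp, subst sum.reindex) auto
  finally show ?thesis .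
qed

lemma sum_permutations_of_set_rev:
  "(\<Sum>p\<in>permutations_of_set A. G (rev p)) = (\<Sum>p\<in>permutations_of_set A. G p)"
  by (subst sum.reindex[symmetric, unfolded comp_def]) (auto intro: inj_onI)

lemma sum_permutations_of_set_snoc:
  assumes "finite A" "A \<noteq> {}"
  shows "(\<Sum>p\<in>permutations_of_set A. G p) = (\<Sum>x\<in>A. \<Sum>q\<in>permutations_of_set (A - {x}). G (q @ [x]))"
proof -
  have "(\<Sum>p\<in>permutations_of_set A. G p) = (\<Sum>p\<in>permutations_of_set A. G (rev p))"
    by (rule sum_permutations_of_set_rev[symmetric])
  also have "\<dots> = (\<Sum>x\<in>A. \<Sum>q\<in>permutations_of_set (A - {x}). G (rev q @ [x]))"
    by (simp add: sum_permutations_of_set_cons[OF assms])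
  also have "\<dots> = (\<Sum>x\<in>A. \<Sum>q\<in>permutations_of_set (A - {x}). G (q @ [x]))"
    by (intro sum.cong refl sum_permutations_of_set_rev[where G = "\<lambda>q. G (q @ [_])"])
  finally show ?thesis .
qed

lemma bij_betw_permutes_list:
  "bij_betw (\<lambda>\<sigma>. map \<sigma> [0..<k]) {\<sigma>. \<sigma> permutes {..<k}} (permutations_of_set {..<k})"
proof (rule bij_betwI')
  fix \<sigma> \<tau> assume "\<sigma> \<in> {\<sigma>. \<sigma> permutes {..<k}}" and "\<tau> \<in> {\<sigma>. \<sigma> permutes {..<k}}"
  then have "\<sigma> i = \<tau> i" if "map \<sigma> [0..<k] = map \<tau> [0..<k]" for i
    using that nth_map_upt[of i k 0 \<sigma>] nth_map_upt[of i k 0 \<tau>]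
    by (cases "i < k") (simp_all add: permutes_not_in)
  then show "(map \<sigma> [0..<k] = map \<tau> [0..<k]) = (\<sigma> = \<tau>)"
    by auto
next
  fix \<sigma> assume "\<sigma> \<in> {\<sigma>. \<sigma> permutes {..<k}}"
  then have p: "\<sigma> permutes {..<k}" by simp
  show "map \<sigma> [0..<k] \<in> permutations_of_set {..<k}"
  proof (rule permutations_of_setI)
    show "set (map \<sigma> [0..<k]) = {..<k}"
      using permutes_image[OF p] by (simp add: atLeast0LessThan)
    show "distinct (map \<sigma> [0..<k])"
      using permutes_inj[OF p] by (simp add: distinct_map inj_on_def)
  qed
next
  fix q assume q: "q \<in> permutations_of_set {..<k}"
  then have lq: "length q = k" and dq: "distinct q" "set q = {..<k}"
    by (auto simp: permutations_of_set_def distinct_card[symmetric])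
  define \<sigma> where "\<sigma> i = (if i < k then q ! i else i)" for i
  have "bij_betw ((!) q) {..<k} {..<k}" using bij_betw_nth[OF dq(1)] lq dq(2) by simp
  then have "bij_betw \<sigma> {..<k} {..<k}" by (rule bij_betw_cong[THEN iffD1, rotated]) (simp add: \<sigma>_def)
  then have "\<sigma> permutes {..<k}" by (rule bij_imp_permutes) (simp add: \<sigma>_def)
  moreover have "q = map \<sigma> [0..<k]" by (rule nth_equalityI) (auto simp: lq \<sigma>_def)
  ultimately show "\<exists>\<sigma>\<in>{\<sigma>. \<sigma> permutes {..<k}}. q = map \<sigma> [0..<k]" by blast
qed

lemma sum_permutes_upt:
  "(\<Sum>\<sigma> | \<sigma> permutes {..<k}. G (map \<sigma> [0..<k])) = (\<Sum>p\<in>permutations_of_set {..<k}. G p)"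
  using sum.reindex_bij_betw[OF bij_betw_permutes_list, of G] by simp

lemma sum_permutes_nth:
  assumes "distinct ps"
  shows "(\<Sum>\<sigma> | \<sigma> permutes {..<length ps}. G (map (\<lambda>i. ps ! \<sigma> i) [0..<length ps]))
       = (\<Sum>p\<in>permutations_of_set (set ps). G p)"
proof -
  let ?k = "length ps"
  have inj: "inj_on ((!) ps) {..<?k}"
    using assms by (auto intro!: inj_on_nth)
  have "(\<Sum>\<sigma> | \<sigma> permutes {..<?k}. G (map (\<lambda>i. ps ! \<sigma> i) [0..<?k]))
      = (\<Sum>q\<in>permutations_of_set {..<?k}. G (map ((!) ps) q))"
    using sum_permutes_upt[where k = ?k and G = "\<lambda>q. G (map ((!) ps) q)"] by (simp add: comp_def)
  also have "\<dots> = (\<Sum>p\<in>map ((!) ps) ` permutations_of_set {..<?k}. G p)"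
    by (rule sum.reindex[symmetric, unfolded comp_def], rule inj_on_mapI)
      (use inj in \<open>auto simp: permutations_of_set_def\<close>)
  also have "map ((!) ps) ` permutations_of_set {..<?k} = permutations_of_set ((!) ps ` {..<?k})"
    using inj by (simp add: permutations_of_set_image_inj)
  also have "(!) ps ` {..<?k} = set ps"
    by (auto simp: set_conv_nth)
  finally show ?thesis .
qed

definition alt_binom :: "nat \<Rightarrow> nat \<Rightarrow> 'k::comm_ring_1" where
  "alt_binom n k = (-1) ^ k * of_nat (n choose k)"

lemma alt_binom_0 [simp]: "alt_binom n 0 = 1"
  unfolding alt_binom_def by simp

lemma alt_binom_above [simp]: "alt_binom m (Suc m) = 0"
  unfolding alt_binom_def by (simp add: binomial_eq_0)

lemma alt_binom_Suc: "alt_binom (Suc m) (Suc k) = alt_binom m (Suc k) - (alt_binom m k :: 'k::comm_ring_1)"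
  unfolding alt_binom_def by (simp add: algebra_simps)

lemma alt_binom_pascal:
  fixes g :: "nat \<Rightarrow> 'k::comm_ring_1"
  shows "(\<Sum>k\<le>Suc m. alt_binom (Suc m) k * g k)
       = (\<Sum>k\<le>m. alt_binom m k * g k) - (\<Sum>k\<le>m. alt_binom m k * g (Suc k))"
proof -
  have "(\<Sum>k\<le>Suc m. alt_binom (Suc m) k * g k)
      = g 0 + (\<Sum>k\<le>m. alt_binom m (Suc k) * g (Suc k)) - (\<Sum>k\<le>m. alt_binom m k * g (Suc k))"
    by (simp only: sum.atMost_Suc_shift alt_binom_0 alt_binom_Suc left_diff_distrib sum_subtractf
        mult_1_left add_diff_eq)
  also have "g 0 + (\<Sum>k\<le>m. alt_binom m (Suc k) * g (Suc k)) = (\<Sum>k\<le>Suc m. alt_binom m k * g k)"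
    by (simp only: sum.atMost_Suc_shift alt_binom_0 mult_1_left)
  also have "\<dots> = (\<Sum>k\<le>m. alt_binom m k * g k)"
    by simp
  finally show ?thesis .
qed

lemma alt_binom_pascal_fa:
  "(\<Sum>k\<le>Suc m. fa_scale (alt_binom (Suc m) k) (G k))
   = (\<Sum>k\<le>m. fa_scale (alt_binom m k) (G k))
     - (\<Sum>k\<le>m. fa_scale (alt_binom m k) (G (Suc k) :: ('i, 'k::comm_ring_1) freealg))"
  unfolding fa_scale_def fun_diff_def fun_sum_apply
  by (rule ext) (rule alt_binom_pascal)

lemma iter_comm_snoc:
  "iter_comm D (u @ [a]) f = iter_comm D u (fa_lmul a f) - fa_lmul a (iter_comm D u f)"
  by (induct u arbitrary: D) auto

definition sym_comm ::
  "(('i, 'k::comm_ring_1) freealg \<Rightarrow> ('i, 'k) freealg) \<Rightarrow> (nat \<Rightarrow> 'i) \<Rightarrow> nat set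
   \<Rightarrow> ('i, 'k) freealg \<Rightarrow> ('i, 'k) freealg" where
  "sym_comm D \<alpha> N f = (\<Sum>p\<in>permutations_of_set N. iter_comm D (map \<alpha> p) f)"

definition split_word ::
  "(('i, 'k::comm_ring_1) freealg \<Rightarrow> ('i, 'k) freealg) \<Rightarrow> (nat \<Rightarrow> 'i) \<Rightarrow> ('i, 'k) freealg
   \<Rightarrow> nat list \<Rightarrow> nat \<Rightarrow> ('i, 'k) freealg" where
  "split_word D \<alpha> f p k =
     fa_mult (fa_word (map \<alpha> (take k p))) (D (fa_mult (fa_word (map \<alpha> (drop k p))) f))"

definition sym_expand ::
  "(('i, 'k::comm_ring_1) freealg \<Rightarrow> ('i, 'k) freealg) \<Rightarrow> (nat \<Rightarrow> 'i) \<Rightarrow> nat set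
   \<Rightarrow> ('i, 'k) freealg \<Rightarrow> ('i, 'k) freealg" where
  "sym_expand D \<alpha> N f =
     (\<Sum>p\<in>permutations_of_set N. \<Sum>k\<le>card N. fa_scale (alt_binom (card N) k) (split_word D \<alpha> f p k))"

lemma split_word_snoc:
  "k \<le> length q \<Longrightarrow> split_word D \<alpha> f (q @ [b]) k = split_word D \<alpha> (fa_lmul (\<alpha> b) f) q k"
  unfolding split_word_def by (simp add: fa_mult_word_append fa_lmul_def)

lemma split_word_cons:
  "fa_lmul (\<alpha> b) (split_word D \<alpha> f q k) = split_word D \<alpha> f (b # q) (Suc k)"
  unfolding split_word_def by (simp add: fa_mult_word_cons)

(* Both sides satisfy the same recursion obtained by removing the last index. *)
lemma sym_comm_rec:
  assumes "finite N" "N \<noteq> {}"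
  shows "sym_comm D \<alpha> N f =
    (\<Sum>b\<in>N. sym_comm D \<alpha> (N - {b}) (fa_lmul (\<alpha> b) f) - fa_lmul (\<alpha> b) (sym_comm D \<alpha> (N - {b}) f))"
  unfolding sym_comm_def sum_permutations_of_set_snoc[OF assms]
  by (simp only: map_append list.map iter_comm_snoc sum_subtractf fa_lmul_sum)

lemma sym_expand_rec:
  assumes fin: "finite N" and ne: "N \<noteq> {}"
  shows "sym_expand D \<alpha> N f =
    (\<Sum>b\<in>N. sym_expand D \<alpha> (N - {b}) (fa_lmul (\<alpha> b) f) - fa_lmul (\<alpha> b) (sym_expand D \<alpha> (N - {b}) f))"
proof -
  obtain m where m: "card N = Suc m" using fin ne by (metis card_0_eq not0_implies_Suc)
  let ?S = "\<lambda>G b. \<Sum>q\<in>permutations_of_set (N - {b}). \<Sum>k\<le>m. fa_scale (alt_binom m k) (G q k)"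
  have card_minus: "card (N - {b}) = m" if "b \<in> N" for b
    using that m fin by simp
  have snoc: "sym_expand D \<alpha> (N - {b}) (fa_lmul (\<alpha> b) f) = ?S (\<lambda>q k. split_word D \<alpha> f (q @ [b]) k) b"
    if "b \<in> N" for b
    unfolding sym_expand_def card_minus[OF that]
    by (intro sum.cong refl arg_cong[of _ _ "fa_scale _"] split_word_snoc[symmetric])
      (use that card_minus in \<open>auto dest: length_finite_permutations_of_set\<close>)
  have cons: "fa_lmul (\<alpha> b) (sym_expand D \<alpha> (N - {b}) f) = ?S (\<lambda>q k. split_word D \<alpha> f (b # q) (Suc k)) b"
    if "b \<in> N" for b
    unfolding sym_expand_def card_minus[OF that]
    by (simp add: fa_lmul_sum fa_lmul_scale split_word_cons)
  have "(\<Sum>b\<in>N. sym_expand D \<alpha> (N - {b}) (fa_lmul (\<alpha> b) f) - fa_lmul (\<alpha> b) (sym_expand D \<alpha> (N - {b}) f))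
      = (\<Sum>b\<in>N. ?S (\<lambda>q k. split_word D \<alpha> f (q @ [b]) k) b)
        - (\<Sum>b\<in>N. ?S (\<lambda>q k. split_word D \<alpha> f (b # q) (Suc k)) b)"
    by (simp add: snoc cons sum_subtractf)
  also have "\<dots> = (\<Sum>p\<in>permutations_of_set N. \<Sum>k\<le>m. fa_scale (alt_binom m k) (split_word D \<alpha> f p k))
                   - (\<Sum>p\<in>permutations_of_set N. \<Sum>k\<le>m. fa_scale (alt_binom m k) (split_word D \<alpha> f p (Suc k)))"
    unfolding sum_permutations_of_set_snoc[OF fin ne, of "\<lambda>p. \<Sum>k\<le>m. fa_scale (alt_binom m k) (split_word D \<alpha> f p k)"]
      sum_permutations_of_set_cons[OF fin ne, of "\<lambda>p. \<Sum>k\<le>m. fa_scale (alt_binom m k) (split_word D \<alpha> f p (Suc k))"] ..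
  also have "\<dots> = sym_expand D \<alpha> N f"
    unfolding sym_expand_def m alt_binom_pascal_fa sum_subtractf ..
  finally show ?thesis ..
qed

lemma sym_comm_eq_sym_expand: "finite N \<Longrightarrow> sym_comm D \<alpha> N f = sym_expand D \<alpha> N f"
proof (induct "card N" arbitrary: N f)
  case 0
  then show ?case by (simp add: sym_comm_def sym_expand_def split_word_def fa_scale_one)
next
  case (Suc n)
  then have "N \<noteq> {}" by auto
  with Suc show ?case
    by (simp add: sym_comm_rec[of N] sym_expand_rec[of N])
qed

definition sym_word :: "(nat \<Rightarrow> 'i) \<Rightarrow> nat set \<Rightarrow> ('i, 'k::comm_ring_1) freealg" where
  "sym_word \<alpha> N = (\<Sum>p\<in>permutations_of_set N. fa_word (map \<alpha> p))"

definition split_sum ::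
  "(('i, 'k::comm_ring_1) freealg \<Rightarrow> ('i, 'k) freealg) \<Rightarrow> (nat \<Rightarrow> 'i) \<Rightarrow> nat \<Rightarrow> nat set \<Rightarrow> ('i, 'k) freealg" where
  "split_sum D \<alpha> k N = (\<Sum>p\<in>permutations_of_set N. split_word D \<alpha> (fa_word []) p k)"

(* The expected value of T_k modulo the ideal: (n - k) times the symmetrised derivative. *)
definition deriv_sum :: "(nat \<Rightarrow> 'i) \<Rightarrow> 'i \<Rightarrow> nat \<Rightarrow> nat set \<Rightarrow> ('i, 'k::comm_ring_1) freealg" where
  "deriv_sum \<alpha> \<mu> k N = fa_scale (of_nat (card N - k)) (\<Sum>b\<in>{b\<in>N. \<alpha> b = \<mu>}. sym_word \<alpha> (N - {b}))"

lemma sym_expand_at_unit: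
  "sym_expand D \<alpha> N (fa_word []) = (\<Sum>k\<le>card N. fa_scale (alt_binom (card N) k) (split_sum D \<alpha> k N))"
  unfolding sym_expand_def split_sum_def fa_scale_sum by (rule sum.swap)

lemma sym_word_cons:
  assumes "finite N" "N \<noteq> {}"
  shows "sym_word \<alpha> N = (\<Sum>x\<in>N. fa_lmul (\<alpha> x) (sym_word \<alpha> (N - {x})))"
  unfolding sym_word_def fa_lmul_sum
  by (simp add: sum_permutations_of_set_cons[OF assms] fa_lmul_word)

lemma split_sum_Suc:
  assumes "finite N" "N \<noteq> {}"
  shows "split_sum D \<alpha> (Suc k) N = (\<Sum>x\<in>N. fa_lmul (\<alpha> x) (split_sum D \<alpha> k (N - {x})))"
  unfolding split_sum_def fa_lmul_sum
  by (simp add: sum_permutations_of_set_cons[OF assms] split_word_cons)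

lemma sum_remove_swap:
  assumes "finite N"
  shows "(\<Sum>x\<in>N. \<Sum>b\<in>{b\<in>N - {x}. P b}. F x b) = (\<Sum>b\<in>{b\<in>N. P b}. \<Sum>x\<in>N - {b}. F x b)"
proof -
  have "(\<Sum>x\<in>N. \<Sum>b\<in>{b\<in>N - {x}. P b}. F x b) = (\<Sum>x\<in>N. \<Sum>b\<in>{b\<in>N. x \<noteq> b \<and> P b}. F x b)"
    by (intro sum.cong) auto
  also have "\<dots> = (\<Sum>b\<in>N. \<Sum>x\<in>{x\<in>N. x \<noteq> b \<and> P b}. F x b)"
    by (rule sum.swap_restrict[OF assms assms])
  also have "\<dots> = (\<Sum>b\<in>N. if P b then \<Sum>x\<in>N - {b}. F x b else 0)"
    by (intro sum.cong) (auto intro!: sum.cong)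
  also have "\<dots> = (\<Sum>b\<in>{b\<in>N. P b}. \<Sum>x\<in>N - {b}. F x b)"
    by (rule sum.inter_filter[OF assms, symmetric])
  finally show ?thesis .
qed

lemma deriv_sum_Suc:
  assumes fin: "finite N" and k: "Suc k \<le> card N"
  shows "deriv_sum \<alpha> \<mu> (Suc k) N
           = (\<Sum>x\<in>N. fa_lmul (\<alpha> x) (deriv_sum \<alpha> \<mu> k (N - {x})) :: ('i, 'k::comm_ring_1) freealg)"
proof -
  let ?B = "\<lambda>M. \<Sum>b\<in>{b\<in>M. \<alpha> b = \<mu>}. (sym_word \<alpha> (M - {b}) :: ('i, 'k) freealg)"
  have rhs: "(\<Sum>x\<in>N. fa_lmul (\<alpha> x) (deriv_sum \<alpha> \<mu> k (N - {x})))
           = fa_scale (of_nat (card N - Suc k)) (\<Sum>x\<in>N. fa_lmul (\<alpha> x) (?B (N - {x})))"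
    unfolding deriv_sum_def fa_lmul_scale fa_scale_sum[of "of_nat (card N - Suc k)"]
    by (intro sum.cong refl) (simp add: fin)
  show ?thesis
  proof (cases "card N - Suc k = 0")
    case True
    then show ?thesis unfolding rhs by (simp add: deriv_sum_def fa_scale_zero_left)
  next
    case False
    then have two: "2 \<le> card N" using k by linarith
    have "(\<Sum>x\<in>N. fa_lmul (\<alpha> x) (?B (N - {x})))
        = (\<Sum>b\<in>{b\<in>N. \<alpha> b = \<mu>}. \<Sum>x\<in>N - {b}. fa_lmul (\<alpha> x) (sym_word \<alpha> (N - {b} - {x})))"
      unfolding fa_lmul_sum
      by (subst sum_remove_swap[OF fin, symmetric]) (simp add: Diff_insert2[symmetric] insert_commute)
    also have "\<dots> = ?B N"
    proof (intro sum.cong refl)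
      fix b assume "b \<in> {b\<in>N. \<alpha> b = \<mu>}"
      then have "N - {b} \<noteq> {}"
        using two card_mono[OF finite.intros(2)[OF finite.emptyI, of b], of N] by auto
      then show "(\<Sum>x\<in>N - {b}. fa_lmul (\<alpha> x) (sym_word \<alpha> (N - {b} - {x}))) = sym_word \<alpha> (N - {b})"
        by (intro sym_word_cons[symmetric]) (use fin in auto)
    qed
    finally have "(\<Sum>x\<in>N. fa_lmul (\<alpha> x) (?B (N - {x}))) = ?B N" .
    then show ?thesis
      unfolding rhs by (simp only: deriv_sum_def)
  qed
qed

lemma coexp_distinct:
  assumes "distinct ps"
  shows "coexp (map \<alpha> ps)
       = fa_scale (inverse (of_nat (fact (length ps)))) (sym_word \<alpha> (set ps) :: ('i, 'k::field_char_0) freealg)"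
proof -
  let ?k = "length ps"
  have word_eq: "map (\<lambda>i. map \<alpha> ps ! \<sigma> i) [0..<?k] = map \<alpha> (map (\<lambda>i. ps ! \<sigma> i) [0..<?k])"
    if "\<sigma> permutes {..<?k}" for \<sigma>
    unfolding map_map comp_def by (intro map_cong) (use permutes_in_image[OF that] in auto)
  then have "(\<Sum>\<sigma> | \<sigma> permutes {..<?k}. fa_word (map (\<lambda>i. map \<alpha> ps ! \<sigma> i) [0..<?k]))
           = (\<Sum>\<sigma> | \<sigma> permutes {..<?k}. (fa_word (map \<alpha> (map (\<lambda>i. ps ! \<sigma> i) [0..<?k])) :: ('i, 'k) freealg))"
    by (intro sum.cong refl) (simp only: mem_Collect_eq word_eq)
  also have "\<dots> = sym_word \<alpha> (set ps)"
    unfolding sym_word_def by (rule sum_permutes_nth[OF assms])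
  finally show ?thesis unfolding coexp_def by simp
qed

lemma sym_word_coexp:
  assumes "finite N"
  shows "sym_word \<alpha> N
       = fa_scale (of_nat (fact (card N))) (coexp (map \<alpha> (sorted_list_of_set N)) :: ('i, 'k::field_char_0) freealg)"
  using assms by (simp add: coexp_distinct fa_scale_scale fa_scale_one)

lemma coexp_deriv_distinct:
  assumes ps: "distinct ps"
  shows "coexp_deriv \<mu> (map \<alpha> ps) = fa_scale (inverse (of_nat (fact (length ps - 1))))
           (\<Sum>b\<in>{b\<in>set ps. \<alpha> b = \<mu>}. sym_word \<alpha> (set ps - {b}) :: ('i, 'k::field_char_0) freealg)"
proof -
  let ?J = "{j. j < length ps \<and> \<alpha> (ps ! j) = \<mu>}"
  have removed: "distinct (take j ps @ drop (Suc j) ps)" "set (take j ps @ drop (Suc j) ps) = set ps - {ps ! j}"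
    if "j < length ps" for j
  proof -
    have split: "ps = take j ps @ ps ! j # drop (Suc j) ps"
      using that by (rule id_take_nth_drop)
    have "distinct (take j ps @ ps ! j # drop (Suc j) ps)"
      using ps split by metis
    moreover have "set ps = set (take j ps @ ps ! j # drop (Suc j) ps)"
      using split by metis
    ultimately show "distinct (take j ps @ drop (Suc j) ps)"
      and "set (take j ps @ drop (Suc j) ps) = set ps - {ps ! j}"
      by auto
  qed
  have "coexp_deriv \<mu> (map \<alpha> ps)
      = (\<Sum>j\<in>?J. fa_scale (inverse (of_nat (fact (length ps - 1)))) (sym_word \<alpha> (set ps - {ps ! j})))"
    unfolding coexp_deriv_def
  proof (intro sum.cong)
    fix j assume "j \<in> ?J"
    then have j: "j < length ps" by simp
    have "take j (map \<alpha> ps) @ drop (Suc j) (map \<alpha> ps) = map \<alpha> (take j ps @ drop (Suc j) ps)"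
      by (simp add: take_map drop_map)
    moreover have "length (take j ps @ drop (Suc j) ps) = length ps - 1"
      using j by simp
    ultimately show "coexp (take j (map \<alpha> ps) @ drop (Suc j) (map \<alpha> ps))
        = fa_scale (inverse (of_nat (fact (length ps - 1)))) (sym_word \<alpha> (set ps - {ps ! j}))"
      using coexp_distinct[OF removed(1)[OF j], of \<alpha>] removed(2)[OF j] by simp
  qed auto
  also have "\<dots> = fa_scale (inverse (of_nat (fact (length ps - 1)))) (\<Sum>j\<in>?J. sym_word \<alpha> (set ps - {ps ! j}))"
    by (simp only: fa_scale_sum)
  also have "(\<Sum>j\<in>?J. sym_word \<alpha> (set ps - {ps ! j})) = (\<Sum>b\<in>{b\<in>set ps. \<alpha> b = \<mu>}. sym_word \<alpha> (set ps - {b}) :: ('i, 'k) freealg)"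
  proof (rule sym, rule sum.reindex_cong)
    show "inj_on ((!) ps) ?J"
      using ps by (auto intro!: inj_on_nth)
    show "{b\<in>set ps. \<alpha> b = \<mu>} = (!) ps ` ?J"
      by (auto simp: in_set_conv_nth image_iff)
  qed simp
  finally show ?thesis .
qed

lemma fact_over_fact_pred: "0 < n \<Longrightarrow> (fact n :: 'k::field_char_0) * inverse (fact (n - 1)) = of_nat n"
  by (cases n) (simp_all add: field_simps)

lemma deriv_sum_0_coexp:
  assumes "finite N"
  shows "deriv_sum \<alpha> \<mu> 0 N
       = fa_scale (of_nat (fact (card N))) (coexp_deriv \<mu> (map \<alpha> (sorted_list_of_set N)) :: ('i, 'k::field_char_0) freealg)"
proof (cases "card N = 0")
  case True
  with assms show ?thesis by (simp add: deriv_sum_def coexp_deriv_def fa_scale_zero_left fa_scale_zero_right)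
next
  case False
  then show ?thesis
    using assms unfolding deriv_sum_def coexp_deriv_distinct[OF distinct_sorted_list_of_set]
    by (simp only: fa_scale_scale of_nat_fact fact_over_fact_pred length_sorted_list_of_set
        set_sorted_list_of_set diff_zero)
qed

lemma split_sum_deriv_sum_congruent:
  fixes D :: "('i::finite, 'k::field_char_0) freealg \<Rightarrow> ('i, 'k) freealg"
  assumes D: "is_hat_partial C \<mu> D"
  shows "finite N \<Longrightarrow> k \<le> card N \<Longrightarrow> split_sum D \<alpha> k N - deriv_sum \<alpha> \<mu> k N \<in> env_ideal C"
proof (induct k arbitrary: N)
  case 0
  let ?as = "map \<alpha> (sorted_list_of_set N)"
  have "split_sum D \<alpha> 0 N = D (sym_word \<alpha> N)"
    unfolding split_sum_def split_word_def sym_word_def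
    by (simp add: hat_partial_sum[OF D] fa_carrier_word fa_mult_word_word)
  also have "\<dots> = fa_scale (of_nat (fact (card N))) (D (coexp ?as))"
    unfolding sym_word_coexp[OF \<open>finite N\<close>] by (rule hat_partial_scale[OF D fa_carrier_coexp])
  finally have "split_sum D \<alpha> 0 N - deriv_sum \<alpha> \<mu> 0 N
      = fa_scale (of_nat (fact (card N))) (D (coexp ?as) - coexp_deriv \<mu> ?as)"
    by (simp only: deriv_sum_0_coexp[OF \<open>finite N\<close>] fa_scale_diff)
  also have "\<dots> \<in> env_ideal C"
    by (rule env_ideal_scale[OF hat_partial_coexp[OF D]])
  finally show ?case .
next
  case (Suc k)
  from Suc.prems have "N \<noteq> {}" by auto
  with Suc.prems have "split_sum D \<alpha> (Suc k) N - deriv_sum \<alpha> \<mu> (Suc k) N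
      = (\<Sum>x\<in>N. fa_lmul (\<alpha> x) (split_sum D \<alpha> k (N - {x}) - deriv_sum \<alpha> \<mu> k (N - {x})))"
    by (simp add: split_sum_Suc deriv_sum_Suc fa_lmul_diff sum_subtractf)
  also have "\<dots> \<in> env_ideal C"
    using Suc.prems by (intro env_ideal_sum env_ideal_lmul Suc.hyps) auto
  finally show ?case .
qed

lemma alt_binom_weighted_sum:
  assumes "2 \<le> n"
  shows "(\<Sum>k\<le>n. alt_binom n k * of_nat (n - k)) = (0::'k::comm_ring_1)"
proof -
  obtain m where n: "n = Suc m" and m: "0 < m" using assms by (cases n) auto
  have "alt_binom n k * of_nat (n - k) = of_nat n * ((-1) ^ k * (of_nat (m choose k) :: 'k))" for k
  proof -
    have "(n - k) * (n choose k) = n * (m choose k)"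
      using binomial_absorb_comp[of n k] n by simp
    then have absorb: "(of_nat (n - k) :: 'k) * of_nat (n choose k) = of_nat n * of_nat (m choose k)"
      by (metis of_nat_mult)
    have "alt_binom n k * of_nat (n - k) = (-1) ^ k * ((of_nat (n - k) :: 'k) * of_nat (n choose k))"
      unfolding alt_binom_def by (simp only: mult_ac)
    then show ?thesis
      unfolding absorb by (simp only: mult_ac)
  qed
  then have "(\<Sum>k\<le>n. alt_binom n k * of_nat (n - k)) = of_nat n * (\<Sum>k\<le>n. (-1) ^ k * (of_nat (m choose k) :: 'k))"
    by (simp only: sum_distrib_left)
  also have "(\<Sum>k\<le>n. (-1) ^ k * (of_nat (m choose k) :: 'k)) = (\<Sum>k\<le>m. (-1) ^ k * of_nat (m choose k))"
    unfolding n by (simp only: sum.atMost_Suc binomial_eq_0[OF lessI] of_nat_0 mult_zero_right add_0_right)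
  also have "\<dots> = 0"
    by (rule choose_alternating_sum[OF m])
  finally show ?thesis by simp
qed

lemma deriv_sum_alternating:
  assumes "2 \<le> card N"
  shows "(\<Sum>k\<le>card N. fa_scale (alt_binom (card N) k) (deriv_sum \<alpha> \<mu> k N)) = (0 :: ('i, 'k::comm_ring_1) freealg)"
  unfolding deriv_sum_def fa_scale_scale fa_scale_sum_left alt_binom_weighted_sum[OF assms]
  by (rule fa_scale_zero_left)

theorem lemma4p6:
  fixes C :: "'i::finite \<Rightarrow> 'i \<Rightarrow> 'i \<Rightarrow> 'k::field_char_0"
    and \<mu> :: 'i and \<alpha> :: "nat \<Rightarrow> 'i" and w :: nat
    and D :: "('i, 'k) freealg \<Rightarrow> ('i, 'k) freealg"
  assumes "is_lie_alg C"
    and "is_hat_partial C \<mu> D"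
    and "w \<ge> 2"
  shows "(\<Sum>\<sigma> | \<sigma> permutes {..<w}. iter_comm D (map (\<lambda>i. \<alpha> (\<sigma> i)) [0..<w]) (fa_word []))
           \<in> env_ideal C"
proof -
  let ?N = "{..<w}"
  have "(\<Sum>\<sigma> | \<sigma> permutes ?N. iter_comm D (map (\<lambda>i. \<alpha> (\<sigma> i)) [0..<w]) (fa_word []))
      = sym_comm D \<alpha> ?N (fa_word [])"
    unfolding sym_comm_def sum_permutes_upt[symmetric] by (simp add: comp_def)
  also have "\<dots> = (\<Sum>k\<le>w. fa_scale (alt_binom w k) (split_sum D \<alpha> k ?N))"
    by (simp add: sym_comm_eq_sym_expand sym_expand_at_unit)
  also have "\<dots> = (\<Sum>k\<le>w. fa_scale (alt_binom w k) (split_sum D \<alpha> k ?N - deriv_sum \<alpha> \<mu> k ?N))"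
    using deriv_sum_alternating[of ?N \<alpha> \<mu>] \<open>w \<ge> 2\<close> by (simp add: fa_scale_diff sum_subtractf)
  also have "\<dots> \<in> env_ideal C"
    by (intro env_ideal_sum env_ideal_scale split_sum_deriv_sum_congruent[OF assms(2)]) auto
  finally show ?thesis .
qed

end
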